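(* In the 3-body problem in ${\bf S}^2$ with masses $m_1,m_2,m_3>0$, fix $z\in(-1,1)$ and $r=(1-z^2)^{1/2}$. There exists $\omega\neq 0$ such that ${\bf q}_i(t)=(r\cos(\omega t+\alpha_i), r\sin(\omega t+\alpha_i), z)$ with $\alpha_1=0,\alpha_2=2\pi/3,\alpha_3=4\pi/3$ is a solution of the equations of motion (i.e. the equilateral triangle in the plane $z=$ constant, given suitable initial velocities, rotates in its own plane as an elliptic relative equilibrium) if and only if $m_1=m_2=m_3$.
   Context: The $n$-body problem in ${\bf S}^2$: bodies of masses $m_1,\dots,m_n>0$ have positions ${\bf q}_i=(x_i,y_i,z_i)\in\mathbb R^3$ on the unit sphere ${\bf S}^2=\{{\bf q}:{\bf q}\cdot{\bf q}=1\}$ ($\cdot$ the Euclidean inner product), and satisfy $$\ddot{\bf q}_i=\sum_{j\ne i}\frac{m_j[{\bf q}_j-({\bf q}_i\cdot{\bf q}_j){\bf q}_i]}{[1-({\bf q}_i\cdot{\bf q}_j)^2]^{3/2}}-(\dot{\bf q}_i\cdot\dot{\bf q}_i){\bf q}_i,\qquad {\bf q}_i\cdot{\bf q}_i=1,\ \ {\bf q}_i\cdot\dot{\bf q}_i=0,$$ $i=1,\dots,n$, defined only for configurations with $({\bf q}_i\cdot{\bf q}_j)^2\ne 1$ for all $i\ne j$. *)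

theory Defs
  imports "HOL-Analysis.Analysis"
begin

definition S2_accel :: "nat \<Rightarrow> (nat \<Rightarrow> real) \<Rightarrow> (nat \<Rightarrow> real^3) \<Rightarrow> (nat \<Rightarrow> real^3) \<Rightarrow> nat \<Rightarrow> real^3" where
  "S2_accel n m x v i =
     (\<Sum>j\<in>{..<n} - {i}. (m j / (1 - (x i \<bullet> x j)\<^sup>2) powr (3/2)) *\<^sub>R (x j - (x i \<bullet> x j) *\<^sub>R x i))
     - (v i \<bullet> v i) *\<^sub>R x i"

definition S2_solution :: "nat \<Rightarrow> (nat \<Rightarrow> real) \<Rightarrow> (nat \<Rightarrow> real \<Rightarrow> real^3) \<Rightarrow> bool" where
  "S2_solution n m q \<longleftrightarrow>
     (\<forall>t. \<forall>i<n.
        (q i has_vector_derivative vector_derivative (q i) (at t)) (at t)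
      \<and> ((\<lambda>s. vector_derivative (q i) (at s)) has_vector_derivative
           S2_accel n m (\<lambda>k. q k t) (\<lambda>k. vector_derivative (q k) (at t)) i) (at t)
      \<and> q i t \<bullet> q i t = 1
      \<and> q i t \<bullet> vector_derivative (q i) (at t) = 0
      \<and> (\<forall>j<n. j \<noteq> i \<longrightarrow> (q i t \<bullet> q j t)\<^sup>2 \<noteq> 1))"

end

theory Submission imports Defs begin

(*
  Such uniform circular motion has acceleration -w^2 (q_i - (0,0,z)), and
  all the constraints of a solution (unit length, tangent velocity, no collisions)
  hold automatically.  Hence the motion is a solution iff the S^2 force on every body
  equals that centripetal acceleration at every time.

  With equal masses
  M the force is exactly centripetal for w^2 = 3M / P, P = (1 - c^2)^(3/2).  Conversely
  the component of the equation of motion along the velocity of body i forces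
  sum_{j <> i} m_j sin (phase j - phase i) = 0; for bodies 0 and 1 this gives
  m_1 = m_2 and m_0 = m_2.
*)

lemma inner_vector3:
  "vector [a, b, c] \<bullet> (vector [d, e, f] :: real^3) = a * d + b * e + c * f"
  by (simp add: inner_vec_def sum_3)

lemma vector3_has_vector_derivative:
  assumes "(f has_real_derivative f') (at t)" "(g has_real_derivative g') (at t)"
    and "(h has_real_derivative h') (at t)"
  shows "((\<lambda>t. vector [f t, g t, h t] :: real^3) has_vector_derivative vector [f', g', h']) (at t)"
proof -
  have decomp: "vector [a, b, c] = a *\<^sub>R (vector [1, 0, 0] :: real^3)
      + b *\<^sub>R vector [0, 1, 0] + c *\<^sub>R vector [0, 0, 1]" for a b c :: real
    by (simp add: vec_eq_iff forall_3)
  have "((\<lambda>t. f t *\<^sub>R (vector [1, 0, 0] :: real^3) + g t *\<^sub>R vector [0, 1, 0]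
      + h t *\<^sub>R vector [0, 0, 1]) has_vector_derivative
      f' *\<^sub>R (vector [1, 0, 0] :: real^3) + g' *\<^sub>R vector [0, 1, 0] + h' *\<^sub>R vector [0, 0, 1]) (at t)"
    using assms
    by (auto intro!: derivative_eq_intros simp: has_real_derivative_iff_has_vector_derivative)
  then show ?thesis by (simp only: decomp [symmetric])
qed

section \<open>Uniform motion on a circle of latitude\<close>

definition circle :: "real \<Rightarrow> real \<Rightarrow> real \<Rightarrow> real \<Rightarrow> real \<Rightarrow> real^3" where
  "circle R z w a t = vector [R * cos (w * t + a), R * sin (w * t + a), z]"

definition circle_vel :: "real \<Rightarrow> real \<Rightarrow> real \<Rightarrow> real \<Rightarrow> real^3" where
  "circle_vel R w a t = vector [- (R * w * sin (w * t + a)), R * w * cos (w * t + a), 0]"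

definition unit_tangent :: "real \<Rightarrow> real \<Rightarrow> real \<Rightarrow> real^3" where
  "unit_tangent w a t = vector [- sin (w * t + a), cos (w * t + a), 0]"

definition centre :: "real \<Rightarrow> real^3" where
  "centre z = vector [0, 0, z]"

lemma circle_has_vector_derivative:
  "(circle R z w a has_vector_derivative circle_vel R w a t) (at t)"
  unfolding circle_def [abs_def] circle_vel_def
  by (rule vector3_has_vector_derivative) (auto intro!: derivative_eq_intros)

lemma vector_derivative_circle: "vector_derivative (circle R z w a) (at t) = circle_vel R w a t"
  using circle_has_vector_derivative vector_derivative_at by blast

lemma circle_vel_has_vector_derivative:
  "(circle_vel R w a has_vector_derivative (- (w\<^sup>2)) *\<^sub>R (circle R z w a t - centre z)) (at t)"
proof -
  have "(- (w\<^sup>2)) *\<^sub>R (circle R z w a t - centre z)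
      = vector [- (R * w * (w * cos (w * t + a))), - (R * w * (w * sin (w * t + a))), 0]"
    by (simp add: circle_def centre_def vec_eq_iff forall_3 power2_eq_square)
  then show ?thesis
    unfolding circle_vel_def [abs_def]
    by (simp only:) (rule vector3_has_vector_derivative; auto intro!: derivative_eq_intros)
qed

lemma inner_circle_circle:
  "circle R z w a t \<bullet> circle R z w b t = R\<^sup>2 * cos (a - b) + z\<^sup>2"
proof -
  have "a - b = (w * t + a) - (w * t + b)" by simp
  then show ?thesis
    unfolding circle_def inner_vector3 by (simp only: cos_diff) (simp add: algebra_simps power2_eq_square)
qed

lemma circle_on_sphere: "R\<^sup>2 + z\<^sup>2 = 1 \<Longrightarrow> circle R z w a t \<bullet> circle R z w a t = 1"
  by (simp add: inner_circle_circle)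

lemma inner_circle_circle_vel: "circle R z w a t \<bullet> circle_vel R w a t = 0"
  unfolding circle_def circle_vel_def inner_vector3 by (simp add: algebra_simps)

lemma inner_circle_vel_self: "circle_vel R w a t \<bullet> circle_vel R w a t = R\<^sup>2 * w\<^sup>2"
proof -
  have "circle_vel R w a t \<bullet> circle_vel R w a t
      = (R * w)\<^sup>2 * ((sin (w * t + a))\<^sup>2 + (cos (w * t + a))\<^sup>2)"
    unfolding circle_vel_def inner_vector3 power2_eq_square by algebra
  then show ?thesis by (simp add: power_mult_distrib)
qed

lemma inner_unit_tangent_circle:
  "unit_tangent w a t \<bullet> circle R z w b t = R * sin (b - a)"
proof -
  have "b - a = (w * t + b) - (w * t + a)" by simp
  then show ?thesis
    unfolding unit_tangent_def circle_def inner_vector3 by (simp only: sin_diff) (simp add: algebra_simps)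
qed

lemma inner_unit_tangent_centre: "unit_tangent w a t \<bullet> centre z = 0"
  by (simp add: unit_tangent_def centre_def inner_vector3)

section \<open>The equilateral configuration\<close>

lemma cos_240: "cos (4 * pi / 3) = -1/2" and sin_240: "sin (4 * pi / 3) = - sqrt 3 / 2"
proof -
  have "4 * pi / 3 = 2 * pi - 2 * pi / 3" by simp
  then show "cos (4 * pi / 3) = -1/2" "sin (4 * pi / 3) = - sqrt 3 / 2"
    by (simp_all only: cos_2pi_minus sin_2pi_minus cos_120 sin_120)
qed

definition phase :: "nat \<Rightarrow> real" where
  "phase i = 2 * pi * real i / 3"

lemma phase_values: "phase 0 = 0" "phase 1 = 2 * pi / 3" "phase 2 = 4 * pi / 3"
  by (simp_all add: phase_def)

lemma sum_below_3: "(\<Sum>j<3. f j) = f 0 + f 1 + f 2" for f :: "nat \<Rightarrow> 'a :: comm_monoid_add"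
  by (simp add: numeral_3_eq_3 numeral_2_eq_2 add.assoc)

lemma cos_phase_diff:
  assumes "i < 3" "j < 3" "i \<noteq> j"
  shows "cos (phase i - phase j) = -1/2"
proof -
  have "i = 0 \<or> i = 1 \<or> i = 2" "j = 0 \<or> j = 1 \<or> j = 2" using assms(1,2) by auto
  then have "phase i - phase j \<in> {2*pi/3, 4*pi/3, -(2*pi/3), -(4*pi/3)}"
    using assms(3) by (elim disjE) (simp_all add: phase_def)
  moreover have "cos d = -1/2" if "d \<in> {2*pi/3, 4*pi/3, -(2*pi/3), -(4*pi/3)}" for d
    using that by (elim insertE emptyE) (simp_all only: cos_120 cos_240 cos_minus)
  ultimately show ?thesis by blast
qed

lemma sum_equilateral: "(\<Sum>j<3. circle R z w (phase j) t) = 3 *\<^sub>R centre z"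
proof -
  have "(\<Sum>j<3. circle R z w (phase j) t) = vector [R * (\<Sum>j<3. cos (w * t + phase j)),
      R * (\<Sum>j<3. sin (w * t + phase j)), 3 * z]"
    unfolding sum_below_3 circle_def by (simp add: vec_eq_iff forall_3 algebra_simps)
  also have "\<dots> = 3 *\<^sub>R centre z"
    unfolding sum_below_3 phase_values
    by (simp add: cos_add sin_add cos_120 sin_120 cos_240 sin_240 centre_def vec_eq_iff forall_3)
  finally show ?thesis .
qed

text \<open>The inner product \<open>c\<close> of two distinct vertices, and the factor \<open>(1 - c\<^sup>2) powr (3/2)\<close>
  by which their mutual attraction is divided.\<close>

definition vertex_inner :: "real \<Rightarrow> real \<Rightarrow> real" where
  "vertex_inner R z = z\<^sup>2 - R\<^sup>2 / 2"

definition force_denom :: "real \<Rightarrow> real \<Rightarrow> real" where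
  "force_denom R z = (1 - (vertex_inner R z)\<^sup>2) powr (3/2)"

lemma inner_vertices:
  "i < 3 \<Longrightarrow> j < 3 \<Longrightarrow> i \<noteq> j \<Longrightarrow>
    circle R z w (phase i) t \<bullet> circle R z w (phase j) t = vertex_inner R z"
  by (simp add: inner_circle_circle cos_phase_diff vertex_inner_def)

text \<open>Strictly between the poles the vertex inner product is never \<open>\<plusminus>1\<close>, so the
  configuration is never singular and the force factor is positive.\<close>
lemma vertex_inner_bound:
  fixes R z :: real
  assumes "R\<^sup>2 + z\<^sup>2 = 1" "z\<^sup>2 < 1"
  shows "(vertex_inner R z)\<^sup>2 < 1"
proof -
  have "2 * vertex_inner R z = 3 * z\<^sup>2 - 1"
    using assms(1) by (simp add: vertex_inner_def algebra_simps)
  moreover have "0 \<le> z\<^sup>2" by simp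
  ultimately have "- 1 < vertex_inner R z" "vertex_inner R z < 1"
    using assms(2) by linarith+
  then show ?thesis by (simp add: abs_square_less_1 abs_less_iff)
qed

lemma force_denom_pos:
  assumes "R\<^sup>2 + z\<^sup>2 = 1" "z\<^sup>2 < 1"
  shows "force_denom R z > 0"
proof -
  have "1 - (vertex_inner R z)\<^sup>2 \<noteq> 0" using vertex_inner_bound[OF assms] by linarith
  then show ?thesis unfolding force_denom_def by (rule powr_gt_zero [THEN iffD2])
qed

lemma equilateral_accel:
  assumes "i < 3"
  shows "S2_accel 3 m (\<lambda>k. circle R z w (phase k) t) (\<lambda>k. circle_vel R w (phase k) t) i =
    (\<Sum>j\<in>{..<3} - {i}. (m j / force_denom R z) *\<^sub>R
        (circle R z w (phase j) t - vertex_inner R z *\<^sub>R circle R z w (phase i) t))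
    - (R\<^sup>2 * w\<^sup>2) *\<^sub>R circle R z w (phase i) t"
proof -
  have "circle R z w (phase i) t \<bullet> circle R z w (phase j) t = vertex_inner R z"
    if "j \<in> {..<3} - {i}" for j
    using that assms by (intro inner_vertices) auto
  then show ?thesis
    unfolding S2_accel_def inner_circle_vel_self force_denom_def
    by (intro arg_cong2[where f = "(-)"] refl sum.cong) simp_all
qed

section \<open>Solutions and the equation of motion\<close>

text \<open>Everything except the equation of motion holds automatically, so the rotating
  triangle is a solution iff the force on every body is the centripetal acceleration.\<close>
lemma equilateral_solution_iff:
  assumes "R\<^sup>2 + z\<^sup>2 = 1" "z\<^sup>2 < 1"
  shows "S2_solution 3 m (\<lambda>i. circle R z w (phase i)) \<longleftrightarrow>
    (\<forall>t. \<forall>i<3. S2_accel 3 m (\<lambda>k. circle R z w (phase k) t) (\<lambda>k. circle_vel R w (phase k) t) i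
                = (- (w\<^sup>2)) *\<^sub>R (circle R z w (phase i) t - centre z))"
proof -
  have no_collision: "(circle R z w (phase i) t \<bullet> circle R z w (phase j) t)\<^sup>2 \<noteq> 1"
    if "i < 3" "j < 3" "j \<noteq> i" for i j t
    using that less_irrefl vertex_inner_bound[OF assms] by (metis inner_vertices)
  have equation_iff: "(circle_vel R w (phase i) has_vector_derivative F) (at t)
      \<longleftrightarrow> F = (- (w\<^sup>2)) *\<^sub>R (circle R z w (phase i) t - centre z)" for t i F
    using circle_vel_has_vector_derivative vector_derivative_unique_at by metis
  show ?thesis
    unfolding S2_solution_def vector_derivative_circle equation_iff
    using circle_has_vector_derivative circle_on_sphere[OF assms(1)] inner_circle_circle_vel
      no_collision by auto
qed

text \<open>With equal masses \<open>M\<close> the force is centripetal for the angular velocity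
  \<open>w\<^sup>2 = 3M/P\<close>: the two other bodies sum to \<open>3 \<cdot> centre - q\<^sub>i\<close>, and the remaining
  multiple of \<open>q\<^sub>i\<close> reduces to \<open>w\<^sup>2\<close> because \<open>1 + 2c + 3R\<^sup>2 = 3\<close>.\<close>
lemma equal_masses_accel:
  assumes R: "R\<^sup>2 + z\<^sup>2 = 1" and M: "\<forall>j<3. m j = M" and i: "i < 3"
    and w: "w\<^sup>2 = 3 * M / force_denom R z"
  shows "S2_accel 3 m (\<lambda>k. circle R z w (phase k) t) (\<lambda>k. circle_vel R w (phase k) t) i
    = (- (w\<^sup>2)) *\<^sub>R (circle R z w (phase i) t - centre z)"
proof -
  define q where "q = circle R z w (phase i) t"
  define c where "c = vertex_inner R z"
  define F where "F = M / force_denom R z"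
  have others: "(\<Sum>j\<in>{..<3} - {i}. circle R z w (phase j) t) = 3 *\<^sub>R centre z - q"
  proof -
    have "(\<Sum>j<3. circle R z w (phase j) t) = q + (\<Sum>j\<in>{..<3} - {i}. circle R z w (phase j) t)"
      unfolding q_def using i by (intro sum.remove) auto
    then show ?thesis by (simp add: sum_equilateral algebra_simps)
  qed
  have card: "card ({..<3::nat} - {i}) = 2" using i by simp
  have two_copies: "(\<Sum>j\<in>{..<3} - {i}. c *\<^sub>R q) = (2 * c) *\<^sub>R q"
    by (simp only: sum_constant_scaleR card scaleR_scaleR) simp
  have "S2_accel 3 m (\<lambda>k. circle R z w (phase k) t) (\<lambda>k. circle_vel R w (phase k) t) i
      = F *\<^sub>R (\<Sum>j\<in>{..<3} - {i}. circle R z w (phase j) t - c *\<^sub>R q) - (R\<^sup>2 * w\<^sup>2) *\<^sub>R q"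
    unfolding equilateral_accel[OF i] c_def [symmetric] F_def q_def [symmetric] scaleR_sum_right
    using M by (intro arg_cong2[where f = "(-)"] refl sum.cong) auto
  also have "\<dots> = F *\<^sub>R (3 *\<^sub>R centre z - q - (2 * c) *\<^sub>R q) - (R\<^sup>2 * w\<^sup>2) *\<^sub>R q"
    by (simp only: sum_subtractf others two_copies)
  also have "\<dots> = (3 * F) *\<^sub>R centre z - (F * (1 + 2 * c + 3 * R\<^sup>2)) *\<^sub>R q"
    using w by (simp add: F_def algebra_simps)
  also have "1 + 2 * c + 3 * R\<^sup>2 = 3" using R by (simp add: c_def vertex_inner_def)
  finally show ?thesis
    using w by (simp add: q_def F_def algebra_simps)
qed

text \<open>The component of the equation of motion of body \<open>i\<close> along its direction of
  motion: the centripetal side has none, so the tangential forces must balance.\<close>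
lemma tangential_balance:
  assumes "R \<noteq> 0" "force_denom R z > 0" "i < 3"
    and equation: "S2_accel 3 m (\<lambda>k. circle R z w (phase k) t) (\<lambda>k. circle_vel R w (phase k) t) i
                   = (- (w\<^sup>2)) *\<^sub>R (circle R z w (phase i) t - centre z)"
  shows "(\<Sum>j\<in>{..<3} - {i}. m j * sin (phase j - phase i)) = 0"
proof -
  have "0 = unit_tangent w (phase i) t \<bullet> (- (w\<^sup>2)) *\<^sub>R (circle R z w (phase i) t - centre z)"
    by (simp add: inner_diff_right inner_unit_tangent_circle inner_unit_tangent_centre)
  also have "\<dots> = (\<Sum>j\<in>{..<3} - {i}. (m j / force_denom R z) * (R * sin (phase j - phase i)))"
    unfolding equation [symmetric] equilateral_accel[OF assms(3)]
    by (simp add: inner_diff_right inner_sum_right inner_unit_tangent_circle)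
  also have "\<dots> = (R / force_denom R z) * (\<Sum>j\<in>{..<3} - {i}. m j * sin (phase j - phase i))"
    unfolding sum_distrib_left by (rule sum.cong) auto
  finally show ?thesis using assms(1,2) by simp
qed

text \<open>Necessity: the tangential balance of bodies 0 and 1 reads
  \<open>(m\<^sub>1 - m\<^sub>2) sin(2\<pi>/3) = 0\<close> and \<open>(m\<^sub>2 - m\<^sub>0) sin(2\<pi>/3) = 0\<close>.\<close>
lemma equilateral_solution_equal_masses:
  assumes "R\<^sup>2 + z\<^sup>2 = 1" "z\<^sup>2 < 1"
    and "S2_solution 3 m (\<lambda>i. circle R z w (phase i))"
  shows "m 0 = m 1 \<and> m 1 = m 2"
proof -
  have "R \<noteq> 0" using assms(1,2) by auto
  have balance: "(\<Sum>j\<in>{..<3} - {i}. m j * sin (phase j - phase i)) = 0" if "i < 3" for i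
    using assms(3) that unfolding equilateral_solution_iff[OF assms(1,2)]
    by (intro tangential_balance[OF \<open>R \<noteq> 0\<close> force_denom_pos[OF assms(1,2)] that]) blast
  have "{..<3::nat} - {0} = {1, 2}" "{..<3::nat} - {1} = {0, 2}" by auto
  then have "m 1 * sin (phase 1 - phase 0) + m 2 * sin (phase 2 - phase 0) = 0"
    "m 0 * sin (phase 0 - phase 1) + m 2 * sin (phase 2 - phase 1) = 0"
    using balance[of 0] balance[of 1] by simp_all
  moreover have "phase 1 - phase 0 = 2 * pi / 3" "phase 2 - phase 0 = 4 * pi / 3"
    "phase 0 - phase 1 = - (2 * pi / 3)" "phase 2 - phase 1 = 2 * pi / 3"
    by (simp_all add: phase_def)
  ultimately have "m 1 * sin (2 * pi / 3) + m 2 * sin (4 * pi / 3) = 0"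
    "m 0 * sin (- (2 * pi / 3)) + m 2 * sin (2 * pi / 3) = 0"
    by (simp_all only:)
  then show ?thesis by (simp add: sin_120 sin_240)
qed

lemma equal_masses_solution:
  assumes "R\<^sup>2 + z\<^sup>2 = 1" "z\<^sup>2 < 1" "\<forall>j<3. m j = M" "M > 0"
  defines "w \<equiv> sqrt (3 * M / force_denom R z)"
  shows "w \<noteq> 0" and "S2_solution 3 m (\<lambda>i. circle R z w (phase i))"
proof -
  have positive: "3 * M / force_denom R z > 0" using assms(4) force_denom_pos[OF assms(1,2)] by simp
  then show "w \<noteq> 0" unfolding w_def by (metis less_irrefl real_sqrt_eq_zero_cancel_iff)
  have w2: "w\<^sup>2 = 3 * M / force_denom R z"
    using positive unfolding w_def by simp
  show "S2_solution 3 m (\<lambda>i. circle R z w (phase i))"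
    unfolding equilateral_solution_iff[OF assms(1,2)]
    using equal_masses_accel[OF assms(1,3) _ w2] by blast
qed

theorem mainTheorem9:
  fixes m :: "nat \<Rightarrow> real" and z :: real
  assumes "m 0 > 0" and "m 1 > 0" and "m 2 > 0"
    and "-1 < z" and "z < 1"
  shows "(\<exists>\<omega>::real. \<omega> \<noteq> 0 \<and>
           S2_solution 3 m (\<lambda>i t. vector [sqrt (1 - z\<^sup>2) * cos (\<omega> * t + 2 * pi * real i / 3),
                                          sqrt (1 - z\<^sup>2) * sin (\<omega> * t + 2 * pi * real i / 3),
                                          z]))
         \<longleftrightarrow> (m 0 = m 1 \<and> m 1 = m 2)"
proof -
  define R where "R = sqrt (1 - z\<^sup>2)"
  have z2: "z\<^sup>2 < 1" using assms(4,5) by (simp add: abs_square_less_1 abs_less_iff)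
  then have R2: "R\<^sup>2 + z\<^sup>2 = 1" by (simp add: R_def)
  have curve: "(\<lambda>i t. vector [R * cos (\<omega> * t + 2 * pi * real i / 3),
      R * sin (\<omega> * t + 2 * pi * real i / 3), z]) = (\<lambda>i. circle R z \<omega> (phase i))" for \<omega>
    by (simp add: fun_eq_iff circle_def phase_def)
  show ?thesis
    unfolding R_def [symmetric] curve
  proof
    assume "\<exists>\<omega>. \<omega> \<noteq> 0 \<and> S2_solution 3 m (\<lambda>i. circle R z \<omega> (phase i))"
    then show "m 0 = m 1 \<and> m 1 = m 2"
      using equilateral_solution_equal_masses[OF R2 z2] by blast
  next
    assume "m 0 = m 1 \<and> m 1 = m 2"
    then have "\<forall>j<3. m j = m 0" by (auto simp: less_Suc_eq numeral_3_eq_3 numeral_2_eq_2)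
    then show "\<exists>\<omega>. \<omega> \<noteq> 0 \<and> S2_solution 3 m (\<lambda>i. circle R z \<omega> (phase i))"
      using equal_masses_solution[OF R2 z2 _ assms(1)] by blast
  qed
qed

end
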